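(* Let $\lambda\in(\frac16,\frac56)$. For every $x\in[0,1]$, $$\liminf_{r\to0}\frac{\log\mu_\lambda(B(x,r))}{\log r}=\gamma_\lambda-\limsup_{n\to\infty}\frac{\beta_1(x,n)\log(6\lambda+1)+\beta_2(x,n)\log(6\lambda-1)}{\beta_{0,3}(x,n)\log3+\beta_{1,2}(x,n)\log6}.$$
   Context: $\gamma_\lambda$ is the unique real number $\ge1$ with $2\cdot3^{-\gamma_\lambda}+(6\lambda+1)6^{-\gamma_\lambda}+(6\lambda-1)6^{-\gamma_\lambda}=1$; $p_0=p_3=3^{-\gamma_\lambda}$, $p_1=(6\lambda+1)6^{-\gamma_\lambda}$, $p_2=(6\lambda-1)6^{-\gamma_\lambda}$; $S_0(x)=x/3$, $S_1(x)=x/6+1/3$, $S_2(x)=-x/6+2/3$, $S_3(x)=x/3+2/3$; $\mu_\lambda$ is the unique Borel probability measure with $\mu_\lambda=\sum_ip_i\,\mu_\lambda\circ S_i^{-1}$. Dynamics: $T(x)=3x$ on $[0,\frac13)$, $6x-2$ on $[\frac13,\frac12)$, $4-6x$ on $[\frac12,\frac23)$, $3x-2$ on $[\frac23,1]$; $U(x)=0,1,2,3$ on these intervals; $u_n(x)=U(T^nx)$; $\beta_i(x,n)=\#\{k<n:u_k(x)=i\}$, $\beta_{i,j}=\beta_i+\beta_j$. *)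

theory Defs
  imports "HOL-Analysis.Analysis" "HOL-Probability.Probability"
begin

definition gamma_lam :: "real \<Rightarrow> real" where
  "gamma_lam lam = (THE g. g \<ge> 1 \<and>
     2 * 3 powr (-g) + (6*lam+1) * 6 powr (-g) + (6*lam-1) * 6 powr (-g) = 1)"

definition p_lam :: "real \<Rightarrow> nat \<Rightarrow> real" where
  "p_lam lam i = (if i = 1 then (6*lam+1) * 6 powr (- gamma_lam lam)
                  else if i = 2 then (6*lam-1) * 6 powr (- gamma_lam lam)
                  else 3 powr (- gamma_lam lam))"

definition S_map :: "nat \<Rightarrow> real \<Rightarrow> real" where
  "S_map i x = (if i = 0 then x/3 else if i = 1 then x/6 + 1/3
                else if i = 2 then -x/6 + 2/3 else x/3 + 2/3)"

definition self_similar_lam :: "real \<Rightarrow> real measure \<Rightarrow> bool" where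
  "self_similar_lam lam mu \<longleftrightarrow> prob_space mu \<and> sets mu = sets borel \<and>
     (\<forall>A\<in>sets borel. measure mu A = (\<Sum>i<4. p_lam lam i * measure mu (S_map i -` A)))"

definition T_map :: "real \<Rightarrow> real" where
  "T_map x = (if x < 1/3 then 3*x else if x < 1/2 then 6*x - 2
              else if x < 2/3 then 4 - 6*x else 3*x - 2)"

definition U_map :: "real \<Rightarrow> nat" where
  "U_map x = (if x < 1/3 then 0 else if x < 1/2 then 1 else if x < 2/3 then 2 else 3)"

definition u_digit :: "nat \<Rightarrow> real \<Rightarrow> nat" where
  "u_digit n x = U_map ((T_map ^^ n) x)"

definition beta_cnt :: "nat \<Rightarrow> real \<Rightarrow> nat \<Rightarrow> nat" where
  "beta_cnt i x n = card {k. k < n \<and> u_digit k x = i}"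

end

theory Submission
  imports Defs
begin

(* Let w_n be the first n digits of x, I_n the cylinder S_(w_0) (... S_(w_(n-1)) [0,1])
   containing x, L_n its length and P_n = mu(I_n) the product of the weights along w_n.
   For L_(n+1) < r <= L_n the ball B(x,r) contains I_(n+1) and is covered by the balls of
   radius L_n around the two endpoints of I_n.  Such an endpoint ball has mass O(P_n), by
   induction on the word: one level up, either the endpoint is at distance at least the
   cylinder length from 0 and 1, and the new ball is a scaled copy of the old one inside a
   single first-level piece, or the endpoint is 0 or 1, so the word consists of 0s or of 3s,
   its mass is exactly (length)^gamma, and the new ball is centred at a junction point, all
   of whose preimages lie outside (0,1), where mu has no mass.  Hence
   log mu(B(x,r)) = log P_n + O(1) and log r = log L_n + O(1), the lower local dimension is
   liminf log P_n / log L_n, and counting digits turns this quotient into gamma minus the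
   quotient of the statement. *)

lemma abs_divide_diff_le:
  fixes a b A B C D G :: real
  assumes "b \<noteq> 0" "B \<noteq> 0" "\<bar>a - A\<bar> \<le> C" "\<bar>b - B\<bar> \<le> D" "\<bar>A / B\<bar> \<le> G"
  shows "\<bar>a / b - A / B\<bar> \<le> (C + G * D) / \<bar>b\<bar>"
proof -
  have "a / b - A / B = ((a - A) - A / B * (b - B)) / b"
    using assms(1,2) by (simp add: field_simps)
  also have "\<bar>\<dots>\<bar> \<le> (\<bar>a - A\<bar> + \<bar>A / B\<bar> * \<bar>b - B\<bar>) / \<bar>b\<bar>"
    unfolding abs_divide by (intro divide_right_mono) (auto intro: abs_triangle_ineq4[THEN order_trans] simp: abs_mult)
  also have "\<dots> \<le> (C + G * D) / \<bar>b\<bar>"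
    using assms(3-5) order_trans[OF abs_ge_zero assms(5)]
    by (intro divide_right_mono add_mono mult_mono) auto
  finally show ?thesis .
qed

lemma abs_ln_diff_le:
  fixes m P c C :: real
  assumes "0 < c" "c \<le> 1" "1 \<le> C" "0 < P" "c * P \<le> m" "m \<le> C * P"
  shows "\<bar>ln m - ln P\<bar> \<le> ln (C / c)"
proof -
  have "0 < c * P"
    using assms by simp
  with assms(5) have pos: "0 < c * P" "0 < m"
    by linarith+
  have "ln c + ln P = ln (c * P)"
    using assms by (simp add: ln_mult)
  also have "\<dots> \<le> ln m"
    using assms pos by simp
  finally have "ln c + ln P \<le> ln m" .
  moreover have "ln m \<le> ln (C * P)"
    using assms pos by simp
  moreover have "ln (C * P) = ln C + ln P"
    using assms by (simp add: ln_mult)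
  moreover have "ln c \<le> 0" "0 \<le> ln C" "ln (C / c) = ln C - ln c"
    using assms by (simp_all add: ln_div)
  ultimately show ?thesis
    unfolding abs_le_iff by linarith
qed

lemma tendsto_const_divide_neg_ln: "((\<lambda>r::real. c / - ln r) \<longlongrightarrow> 0) (at_right 0)"
proof -
  have "filterlim (\<lambda>r::real. - ln r) at_top (at_right 0)"
    by (simp add: filterlim_uminus_at_top ln_at_0)
  then show ?thesis
    by (intro tendsto_divide_0[OF tendsto_const] filterlim_at_top_imp_at_infinity)
qed

lemma bracketing_index:
  fixes L :: "nat \<Rightarrow> real"
  assumes "L \<longlonglongrightarrow> 0" "0 < r" "r \<le> L m"
  shows "\<exists>n\<ge>m. L (Suc n) < r \<and> r \<le> L n"
proof (rule ccontr)
  assume no_bracket: "\<not> ?thesis"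
  have "r \<le> L n" if "m \<le> n" for n
    using that
  proof (induction rule: dec_induct)
    case (step n)
    then show ?case using no_bracket by (auto simp: not_less)
  qed (rule assms(3))
  moreover obtain N where "\<And>n. N \<le> n \<Longrightarrow> L n < r"
    using order_tendstoD(2)[OF assms(1,2)] by (auto simp: eventually_sequentially)
  ultimately have "r \<le> L (max m N)" "L (max m N) < r"
    by auto
  then show False by simp
qed

lemma less_Liminf_margin:
  fixes h :: "'a \<Rightarrow> real"
  assumes "y < Liminf F (\<lambda>x. ereal (h x))"
  obtains z d where "y < ereal z" "0 < d" "eventually (\<lambda>x. z + d < h x) F"
proof -
  obtain z1 where z1: "y < ereal z1" "ereal z1 < Liminf F (\<lambda>x. ereal (h x))"
    using ereal_dense2[OF assms] by blast
  obtain z2 where z2: "ereal z1 < ereal z2" "ereal z2 < Liminf F (\<lambda>x. ereal (h x))"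
    using ereal_dense2[OF z1(2)] by blast
  have "eventually (\<lambda>x. z1 + (z2 - z1) < h x) F"
    using less_LiminfD[OF z2(2)] by simp
  with z1(1) z2(1) show thesis by (intro that[of z1 "z2 - z1"]) auto
qed

lemma liminf_le_Liminf_at_right_sampled:
  fixes f err :: "real \<Rightarrow> real" and g L :: "nat \<Rightarrow> real"
  assumes L_pos: "\<And>n. 0 < L n" and L_lim: "L \<longlonglongrightarrow> 0"
    and err_lim: "(err \<longlongrightarrow> 0) (at_right 0)"
    and approx: "eventually (\<lambda>n. \<forall>r. L (Suc n) < r \<and> r \<le> L n \<longrightarrow>
      \<bar>f r - g n\<bar> \<le> err r) sequentially"
  shows "liminf (\<lambda>n. ereal (g n)) \<le> Liminf (at_right 0) (\<lambda>r. ereal (f r))"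
proof (subst le_Liminf_iff, intro allI impI)
  fix y assume "y < liminf (\<lambda>n. ereal (g n))"
  then obtain z d where zd: "y < ereal z" "0 < d" "eventually (\<lambda>n. z + d < g n) sequentially"
    by (rule less_Liminf_margin)
  then obtain m where m: "\<And>n. m \<le> n \<Longrightarrow> z + d < g n \<and>
      (\<forall>r. L (Suc n) < r \<and> r \<le> L n \<longrightarrow> \<bar>f r - g n\<bar> \<le> err r)"
    using eventually_conj[OF zd(3) approx] by (auto simp: eventually_sequentially)
  have below_Lm: "eventually (\<lambda>r. 0 < r \<and> r < L m) (at_right 0)"
    using L_pos[of m] by (auto simp: eventually_at_right_field)
  show "eventually (\<lambda>r. y < ereal (f r)) (at_right 0)"
    using below_Lm order_tendstoD(2)[OF err_lim zd(2)]
  proof eventually_elim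
    case (elim r)
    then obtain n where "m \<le> n" "L (Suc n) < r" "r \<le> L n"
      using bracketing_index[OF L_lim, of r m] by auto
    with m[of n] elim have "z < f r" by force
    with zd(1) show ?case by (simp add: less_le_trans)
  qed
qed

lemma Liminf_at_right_le_liminf_sampled:
  fixes f err :: "real \<Rightarrow> real" and g L :: "nat \<Rightarrow> real"
  assumes L_pos: "\<And>n. 0 < L n" and L_dec: "\<And>n. L (Suc n) < L n"
    and L_lim: "L \<longlonglongrightarrow> 0" and err_lim: "(err \<longlongrightarrow> 0) (at_right 0)"
    and approx: "eventually (\<lambda>n. \<forall>r. L (Suc n) < r \<and> r \<le> L n \<longrightarrow>
      \<bar>f r - g n\<bar> \<le> err r) sequentially"
  shows "Liminf (at_right 0) (\<lambda>r. ereal (f r)) \<le> liminf (\<lambda>n. ereal (g n))"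
proof (subst le_Liminf_iff, intro allI impI)
  fix y assume "y < Liminf (at_right 0) (\<lambda>r. ereal (f r))"
  then obtain z d where zd: "y < ereal z" "0 < d" "eventually (\<lambda>r. z + d < f r) (at_right 0)"
    by (rule less_Liminf_margin)
  have L_at_right: "filterlim L (at_right 0) sequentially"
    using L_lim L_pos by (intro tendsto_imp_filterlim_at_right) auto
  have "eventually (\<lambda>n. z + d < f (L n)) sequentially"
    "eventually (\<lambda>n. err (L n) < d) sequentially"
    using filterlim_iff[THEN iffD1, OF L_at_right] zd(3) order_tendstoD(2)[OF err_lim zd(2)]
    by blast+
  with approx show "eventually (\<lambda>n. y < ereal (g n)) sequentially"
  proof eventually_elim
    case (elim n)
    then have "z < g n" using L_dec[of n] by force
    with zd(1) show ?case by (simp add: less_le_trans)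
  qed
qed

lemma Liminf_at_right_eq_liminf_sampled:
  fixes f err :: "real \<Rightarrow> real" and g L :: "nat \<Rightarrow> real"
  assumes "\<And>n. 0 < L n" "\<And>n. L (Suc n) < L n" "L \<longlonglongrightarrow> 0" "(err \<longlongrightarrow> 0) (at_right 0)"
    and "eventually (\<lambda>n. \<forall>r. L (Suc n) < r \<and> r \<le> L n \<longrightarrow>
      \<bar>f r - g n\<bar> \<le> err r) sequentially"
  shows "Liminf (at_right 0) (\<lambda>r. ereal (f r)) = liminf (\<lambda>n. ereal (g n))"
  using assms
  by (intro antisym Liminf_at_right_le_liminf_sampled liminf_le_Liminf_at_right_sampled)

definition S_ratio :: "nat \<Rightarrow> real" where
  "S_ratio i = (if i = 1 \<or> i = 2 then 1/6 else 1/3)"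

lemma S_ratio_pos: "0 < S_ratio i"
  by (simp add: S_ratio_def)

lemma S_ratio_bounds: "1/6 \<le> S_ratio i" "S_ratio i \<le> 1/3"
  by (simp_all add: S_ratio_def)

lemma dist_S_map: "dist (S_map i x) (S_map i y) = S_ratio i * dist x y"
  by (simp add: S_map_def S_ratio_def dist_real_def abs_minus_commute
      diff_divide_distrib[symmetric])

lemma surj_S_map: "surj (S_map i)"
proof (rule surjI)
  fix z :: real
  show "S_map i (if i = 0 then 3 * z else if i = 1 then 6 * z - 2
                 else if i = 2 then 4 - 6 * z else 3 * z - 2) = z"
    by (simp add: S_map_def diff_divide_distrib)
qed

lemma inj_S_map: "inj (S_map i)"
proof (rule injI)
  fix x y
  assume "S_map i x = S_map i y"
  then have "S_ratio i * dist x y = 0"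
    by (simp flip: dist_S_map)
  then show "x = y"
    using S_ratio_pos[of i] by simp
qed

lemma S_map_image_cball: "S_map i ` cball c t = cball (S_map i c) (S_ratio i * t)"
proof -
  have "z \<in> S_map i ` cball c t" if "z \<in> cball (S_map i c) (S_ratio i * t)" for z
  proof -
    obtain y where "z = S_map i y"
      using surjD[OF surj_S_map] by blast
    with that show ?thesis
      using S_ratio_bounds(1)[of i] by (auto simp: dist_S_map)
  qed
  then show ?thesis
    using S_ratio_bounds(1)[of i] by (auto simp: dist_S_map)
qed

lemma S_map_vimage_cball: "S_map i -` cball (S_map i c) t = cball c (t / S_ratio i)"
  using S_ratio_bounds(1)[of i] by (auto simp: dist_S_map field_simps)

lemma S_map_image_unit: "S_map i ` {0..1} \<subseteq> {0..1}"
  by (auto simp: S_map_def)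

lemma S_map_pieces_disjoint:
  "i \<noteq> j \<Longrightarrow> i < 4 \<Longrightarrow> j < 4 \<Longrightarrow>
    S_map i ` {0..1} \<inter> S_map j ` {0<..<1} = {}"
  by (auto simp: S_map_def)

lemma S_map_boundary_disjoint: "S_map i ` {0, 1} \<inter> S_map j ` {0<..<1} = {}"
  by (auto simp: S_map_def)

lemma S_map_U_map_T_map: "S_map (U_map x) (T_map x) = x"
  by (simp add: S_map_def U_map_def T_map_def diff_divide_distrib)

lemma T_map_unit: "x \<in> {0..1} \<Longrightarrow> T_map x \<in> {0..1}"
  by (simp add: T_map_def)

(* cyl w is the image of [0,1] under S_(w!0) o ... o S_(w!(length w - 1)) (see cyl_Nil and
   cyl_Cons); describing it by midpoint and length makes the orientation of S_2 irrelevant. *)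

fun cyl_mid :: "nat list \<Rightarrow> real" where
  "cyl_mid [] = 1/2"
| "cyl_mid (i # w) = S_map i (cyl_mid w)"

definition cyl_len :: "nat list \<Rightarrow> real" where
  "cyl_len w = prod_list (map S_ratio w)"

definition cyl :: "nat list \<Rightarrow> real set" where
  "cyl w = cball (cyl_mid w) (cyl_len w / 2)"

definition cyl_ends :: "nat list \<Rightarrow> real set" where
  "cyl_ends w = {cyl_mid w - cyl_len w / 2, cyl_mid w + cyl_len w / 2}"

definition cyl_weight :: "real \<Rightarrow> nat list \<Rightarrow> real" where
  "cyl_weight lam w = prod_list (map (p_lam lam) w)"

lemma cyl_len_Nil [simp]: "cyl_len [] = 1"
  and cyl_len_Cons [simp]: "cyl_len (i # w) = S_ratio i * cyl_len w"
  by (simp_all add: cyl_len_def)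

lemma cyl_len_append: "cyl_len (w @ [i]) = cyl_len w * S_ratio i"
  by (simp add: cyl_len_def)

lemma cyl_weight_Nil [simp]: "cyl_weight lam [] = 1"
  and cyl_weight_Cons [simp]: "cyl_weight lam (i # w) = p_lam lam i * cyl_weight lam w"
  by (simp_all add: cyl_weight_def)

lemma cyl_weight_append: "cyl_weight lam (w @ [i]) = cyl_weight lam w * p_lam lam i"
  by (simp add: cyl_weight_def)

lemma cyl_len_pos: "0 < cyl_len w"
  by (induction w) (simp_all add: S_ratio_pos)

lemma cyl_len_le_third_pow: "cyl_len w \<le> (1/3) ^ length w"
proof (induction w)
  case (Cons i w)
  have "S_ratio i * cyl_len w \<le> 1/3 * (1/3) ^ length w"
    using Cons.IH S_ratio_bounds(2)[of i] cyl_len_pos[of w] by (intro mult_mono) auto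
  then show ?case by simp
qed simp

lemma ln_cyl_len_le: "ln (cyl_len w) \<le> - real (length w) * ln 3"
proof -
  have "ln (cyl_len w) \<le> ln ((1/3) ^ length w)"
    using cyl_len_le_third_pow[of w] cyl_len_pos[of w] by simp
  also have "\<dots> = - real (length w) * ln 3"
    by (simp add: ln_realpow ln_div)
  finally show ?thesis .
qed

lemma cyl_len_le_1: "cyl_len w \<le> 1"
  using cyl_len_le_third_pow[of w] by (simp add: power_le_one order_trans)

lemma cyl_borel [simp]: "cyl w \<in> sets borel"
  by (simp add: cyl_def borel_closed)

lemma cyl_Nil: "cyl [] = {0..1}"
  by (simp add: cyl_def cball_eq_atLeastAtMost)

lemma cyl_Cons: "cyl (i # w) = S_map i ` cyl w"
  by (simp add: cyl_def S_map_image_cball)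

lemma cyl_subset_unit: "cyl w \<subseteq> {0..1}"
proof (induction w)
  case (Cons i w)
  then show ?case
    unfolding cyl_Cons using S_map_image_unit by blast
qed (simp add: cyl_Nil)

lemma cyl_ends_Nil: "cyl_ends [] = {0, 1}"
  by (simp add: cyl_ends_def)

lemma cyl_ends_Cons: "cyl_ends (i # w) = S_map i ` cyl_ends w"
  by (cases "i = 2") (auto simp: cyl_ends_def S_map_def S_ratio_def field_simps)

lemma cyl_ends_subset: "cyl_ends w \<subseteq> cyl w"
  using cyl_len_pos[of w] by (auto simp: cyl_ends_def cyl_def dist_real_def)

lemma cyl_ends_boundary:
  "e \<in> cyl_ends w \<Longrightarrow> e \<in> {0, 1} \<Longrightarrow> set w \<inter> {1, 2} = {}"
proof (induction w arbitrary: e)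
  case (Cons i w)
  then obtain e' where e': "e' \<in> cyl_ends w" "e = S_map i e'"
    by (auto simp: cyl_ends_Cons)
  moreover have "e' \<in> {0..1}"
    using e'(1) cyl_ends_subset cyl_subset_unit by blast
  ultimately have "i \<notin> {1, 2} \<and> e' \<in> {0, 1}"
    using Cons.prems(2) by (auto simp: S_map_def split: if_splits)
  with Cons.IH e'(1) show ?case by auto
qed simp

lemma cyl_ends_gap:
  "e \<in> cyl_ends w \<Longrightarrow> e \<notin> {0, 1} \<Longrightarrow> cball e (cyl_len w) \<subseteq> {0..1}"
proof (induction w arbitrary: e)
  case (Cons i w)
  then obtain e' where e': "e' \<in> cyl_ends w" "e = S_map i e'"
    by (auto simp: cyl_ends_Cons)
  show ?case
  proof (cases "e' \<in> {0, 1}")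
    case True
    have "cyl_len (i # w) \<le> 1/3"
      using mult_mono[OF S_ratio_bounds(2)[of i] cyl_len_le_1[of w]] cyl_len_pos[of w] by simp
    moreover have "e \<in> {1/3..2/3}"
      using True Cons.prems(2) e'(2) by (auto simp: S_map_def)
    ultimately show ?thesis by (auto simp: cball_eq_atLeastAtMost)
  next
    case False
    have "cball e (cyl_len (i # w)) = S_map i ` cball e' (cyl_len w)"
      by (simp add: e'(2) S_map_image_cball)
    also have "\<dots> \<subseteq> S_map i ` {0..1}"
      using Cons.IH[OF e'(1) False] by blast
    finally show ?thesis using S_map_image_unit by blast
  qed
qed (simp add: cyl_ends_Nil)

lemma cyl_weight_eq_len_powr:
  assumes "set w \<inter> {1, 2} = {}"
  shows "cyl_weight lam w = cyl_len w powr gamma_lam lam"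
  using assms
proof (induction w)
  case (Cons i w)
  then have "p_lam lam i = S_ratio i powr gamma_lam lam"
    by (auto simp: p_lam_def S_ratio_def powr_minus_divide powr_divide)
  with Cons show ?case
    using cyl_len_pos[of w] by (simp add: powr_mult)
qed simp

lemma cyl_subset_ball: "x \<in> cyl w \<Longrightarrow> cyl_len w < r \<Longrightarrow> cyl w \<subseteq> ball x r"
  unfolding cyl_def by (auto simp: cball_eq_atLeastAtMost ball_eq_greaterThanLessThan)

lemma ball_subset_cyl_ends:
  assumes "x \<in> cyl w" "r \<le> cyl_len w"
  shows "ball x r \<subseteq> (\<Union>e\<in>cyl_ends w. cball e (cyl_len w))"
  using assms unfolding cyl_def cyl_ends_def
  by (auto simp: cball_eq_atLeastAtMost ball_eq_greaterThanLessThan)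

lemma cyl_len_replicate: "i \<notin> {1, 2} \<Longrightarrow> cyl_len (replicate k i) = (1/3)^k"
  by (induction k) (simp_all add: S_ratio_def)

lemma cyl_replicate:
  "cyl (replicate k 0) = {0..(1/3)^k}" "cyl (replicate k 3) = {1 - (1/3)^k..1}"
proof -
  have "cyl_mid (replicate k 0) = (1/3)^k / 2" "cyl_mid (replicate k 3) = 1 - (1/3)^k / 2"
    by (induction k) (simp_all add: S_map_def field_simps)
  then show "cyl (replicate k 0) = {0..(1/3)^k}" "cyl (replicate k 3) = {1 - (1/3)^k..1}"
    by (simp_all add: cyl_def cball_eq_atLeastAtMost cyl_len_replicate)
qed

locale self_similar_measure = prob_space mu for mu :: "real measure" +
  fixes lam :: real
  assumes lam_gt: "1/6 < lam"
    and sets_mu [simp, measurable_cong]: "sets mu = sets borel"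
    and self_similar: "\<And>A. A \<in> sets borel \<Longrightarrow>
      measure mu A = (\<Sum>i<4. p_lam lam i * measure mu (S_map i -` A))"
begin

abbreviation "p \<equiv> p_lam lam"
abbreviation "\<gamma> \<equiv> gamma_lam lam"

lemma space_mu: "space mu = UNIV"
  using sets_eq_imp_space_eq[OF sets_mu] by simp

lemma p_pos: "0 < p i"
  using lam_gt by (simp add: p_lam_def)

lemma p_sum: "(\<Sum>i<4. p i) = 1"
  using self_similar[of UNIV] prob_space space_mu by simp

lemma p_less_1: "p i < 1"
proof -
  have "p 0 + p 1 + p 2 + p 3 = 1"
    using p_sum by (simp add: eval_nat_numeral)
  moreover have "p i = p 0 \<or> p i = p 1 \<or> p i = p 2"
    by (simp add: p_lam_def)
  ultimately show ?thesis
    using p_pos[of 0] p_pos[of 1] p_pos[of 2] p_pos[of 3] by linarith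
qed

lemma gamma_pos: "0 < \<gamma>"
proof -
  have "3 powr (- \<gamma>) < 3 powr 0"
    using p_less_1[of 0] by (simp add: p_lam_def)
  then show ?thesis by (subst (asm) powr_less_cancel_iff) auto
qed

lemma measure_outside_widened_le:
  assumes "0 \<le> s"
  shows "measure mu (- {-s..1 + s}) \<le> measure mu (- {-(3 * s)..1 + 3 * s})"
proof -
  have vimage: "S_map i -` (- {-s..1 + s}) \<subseteq> - {-(3 * s)..1 + 3 * s}" for i
    using assms by (auto simp: S_map_def split: if_splits)
  have "measure mu (- {-s..1 + s}) = (\<Sum>i<4. p i * measure mu (S_map i -` (- {-s..1 + s})))"
    by (rule self_similar) simp
  also have "\<dots> \<le> (\<Sum>i<4. p i * measure mu (- {-(3 * s)..1 + 3 * s}))"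
    using vimage p_pos by (intro sum_mono mult_left_mono finite_measure_mono) (auto intro: less_imp_le)
  also have "\<dots> = measure mu (- {-(3 * s)..1 + 3 * s})"
    using p_sum by (simp add: sum_distrib_right[symmetric])
  finally show ?thesis .
qed

lemma outside_widened_unit_null:
  assumes "0 < t"
  shows "- {-t..1 + t} \<in> null_sets mu"
proof -
  define A where "A n = - {-(3 ^ n * t)..1 + 3 ^ n * t}" for n :: nat
  have "measure mu (A 0) \<le> measure mu (A n)" for n
  proof (induction n)
    case (Suc n)
    then show ?case
      using measure_outside_widened_le[of "3 ^ n * t"] assms by (simp add: A_def mult.assoc)
  qed simp
  moreover have "(\<lambda>n. measure mu (A n)) \<longlonglongrightarrow> 0"
  proof -
    have "antimono_on UNIV A"
    proof (rule monotone_onI)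
      fix m n :: nat
      assume "m \<le> n"
      then have "3 ^ m * t \<le> 3 ^ n * t"
        using assms by (intro mult_right_mono power_increasing) auto
      then show "A n \<le> A m"
        by (auto simp: A_def)
    qed
    moreover have "(\<Inter>n. A n) = {}"
    proof safe
      fix y assume y: "y \<in> (\<Inter>n. A n)"
      obtain n where "\<bar>y\<bar> / t < 3 ^ n"
        using real_arch_pow[of 3 "\<bar>y\<bar> / t"] by auto
      with y[THEN INT_D, of n] assms show "y \<in> {}"
        by (auto simp: A_def field_simps)
    qed
    moreover have "range A \<subseteq> sets mu"
      by (auto simp: A_def)
    ultimately show ?thesis
      using finite_Lim_measure_decseq[of A] by simp
  qed
  ultimately have "measure mu (A 0) \<le> 0"
    by (intro LIMSEQ_le_const) auto
  then show ?thesis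
    by (intro null_setsI) (simp_all add: A_def emeasure_eq_measure measure_nonneg antisym)
qed

lemma outside_closed_unit_null: "- {0..1} \<in> null_sets mu"
proof -
  have "- {0..1} = (\<Union>n. - {- (1 / Suc n)..1 + 1 / Suc n})"
  proof (intro equalityI subsetI)
    fix y :: real
    assume "y \<in> - {0..1}"
    then have "0 < max (- y) (y - 1)" by auto
    then obtain n where "1 / Suc n < max (- y) (y - 1)"
      using nat_approx_posE by blast
    then have "y \<notin> {- (1 / Suc n)..1 + 1 / Suc n}"
      by (auto simp: less_max_iff_disj)
    then show "y \<in> (\<Union>n. - {- (1 / Suc n)..1 + 1 / Suc n})" by blast
  next
    fix y :: real
    assume "y \<in> (\<Union>n. - {- (1 / Suc n)..1 + 1 / Suc n})"
    then obtain n where n: "y \<notin> {- (1 / Suc n)..1 + 1 / Suc n}" by blast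
    have "0 \<le> 1 / real (Suc n)" by simp
    with n show "y \<in> - {0..1}"
      by (simp only: Compl_iff atLeastAtMost_iff) linarith
  qed
  also have "\<dots> \<in> null_sets mu"
    by (intro null_sets_UN outside_widened_unit_null) simp
  finally show ?thesis .
qed

lemma measure_eq_single_branch:
  assumes "B \<in> sets borel" "i < 4"
    and "\<And>j. j < 4 \<Longrightarrow> j \<noteq> i \<Longrightarrow> measure mu (S_map j -` B) = 0"
  shows "measure mu B = p i * measure mu (S_map i -` B)"
proof -
  have "measure mu B = (\<Sum>j<4. p j * measure mu (S_map j -` B))"
    by (rule self_similar[OF assms(1)])
  also have "\<dots> = (\<Sum>j\<in>{i}. p j * measure mu (S_map j -` B))"
    using assms(2,3) by (intro sum.mono_neutral_right) auto
  finally show ?thesis by simp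
qed

lemma measure_disjoint_closed_unit:
  assumes "A \<inter> {0..1} = {}"
  shows "measure mu A = 0"
proof -
  have "measure mu A \<le> measure mu (- {0..1})"
    using assms by (intro finite_measure_mono) auto
  then show ?thesis
    using measure_eq_0_null_sets[OF outside_closed_unit_null] measure_nonneg[of mu A] by linarith
qed

lemma boundary_point_null: "c \<in> {0, 1} \<Longrightarrow> {c} \<in> null_sets mu"
proof -
  assume c: "c \<in> {0, 1}"
  define i :: nat where "i = (if c = 0 then 0 else 3)"
  have "measure mu {c} = p i * measure mu (S_map i -` {c})"
  proof (rule measure_eq_single_branch)
    fix j :: nat
    assume "j < 4" "j \<noteq> i"
    with c have "S_map j -` {c} \<inter> {0..1} = {}"
      by (auto simp: i_def S_map_def split: if_splits)
    then show "measure mu (S_map j -` {c}) = 0"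
      by (rule measure_disjoint_closed_unit)
  qed (auto simp: i_def)
  also have "S_map i -` {c} = {c}"
    using c by (auto simp: i_def S_map_def)
  finally have "measure mu {c} = 0"
    using p_less_1[of i] by (auto simp: algebra_simps)
  then show ?thesis
    by (intro null_setsI) (simp_all add: emeasure_eq_measure)
qed

lemma outside_unit_null: "- {0<..<1} \<in> null_sets mu"
proof -
  have "- {0..1} \<union> {0} \<union> {1} \<in> null_sets mu"
    by (intro null_sets.Un outside_closed_unit_null boundary_point_null) auto
  moreover have "- {0<..<1} = - {0..1} \<union> {0} \<union> {1::real}" by auto
  ultimately show ?thesis by (simp only:)
qed

lemma measure_disjoint_unit:
  assumes "A \<inter> {0<..<1} = {}"
  shows "measure mu A = 0"
proof -
  have "measure mu A \<le> measure mu (- {0<..<1})"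
    using assms by (intro finite_measure_mono) auto
  then show ?thesis
    using measure_eq_0_null_sets[OF outside_unit_null] measure_nonneg[of mu A] by linarith
qed

lemma measure_restrict_unit: "A \<in> sets borel \<Longrightarrow> measure mu A = measure mu (A \<inter> {0<..<1})"
  using measure_Diff_null_set[OF _ outside_unit_null, of A] by (simp add: Diff_eq)

lemma measure_piece:
  assumes "B \<in> sets borel" "B \<subseteq> S_map i ` {0..1}" "i < 4"
  shows "measure mu B = p i * measure mu (S_map i -` B)"
proof (rule measure_eq_single_branch[OF assms(1,3)])
  fix j :: nat
  assume "j < 4" "j \<noteq> i"
  then have "S_map j ` {0<..<1} \<inter> B = {}"
    using S_map_pieces_disjoint[of i j] assms(2,3) by blast
  then show "measure mu (S_map j -` B) = 0"
    by (intro measure_disjoint_unit) blast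
qed

lemma measure_cball_S_map:
  assumes "cball c t \<subseteq> {0..1}" "i < 4"
  shows "measure mu (cball (S_map i c) (S_ratio i * t)) = p i * measure mu (cball c t)"
proof -
  have image: "cball (S_map i c) (S_ratio i * t) = S_map i ` cball c t"
    by (simp add: S_map_image_cball)
  have "cball (S_map i c) (S_ratio i * t) \<subseteq> S_map i ` {0..1}"
    unfolding image using assms(1) by (rule image_mono)
  then have "measure mu (cball (S_map i c) (S_ratio i * t))
      = p i * measure mu (S_map i -` cball (S_map i c) (S_ratio i * t))"
    using assms(2) by (intro measure_piece) (auto simp: borel_closed)
  also have "S_map i -` cball (S_map i c) (S_ratio i * t) = cball c t"
    unfolding image by (rule inj_vimage_image_eq[OF inj_S_map])
  finally show ?thesis .
qed

lemma measure_cyl: "set w \<subseteq> {..<4} \<Longrightarrow> measure mu (cyl w) = cyl_weight lam w"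
proof (induction w)
  case Nil
  have "measure mu (UNIV - - {0..1}) = measure mu UNIV"
    by (rule measure_Diff_null_set) (auto simp: outside_closed_unit_null)
  then show ?case
    using prob_space space_mu by (simp add: cyl_Nil)
next
  case (Cons i w)
  have "measure mu (cyl (i # w)) = p i * measure mu (cyl w)"
    using measure_cball_S_map[of "cyl_mid w" "cyl_len w / 2" i] cyl_subset_unit[of w] Cons.prems
    by (simp add: cyl_def)
  with Cons show ?case by simp
qed

lemma cyl_weight_pos: "0 < cyl_weight lam w"
  by (induction w) (simp_all add: p_pos)

lemma measure_cball_outside_unit_le:
  assumes "y \<notin> {0<..<1}" "0 < s"
  shows "measure mu (cball y s) \<le> 3 powr \<gamma> * s powr \<gamma>"
proof (cases "s \<le> 1")
  case False
  have "1 * 1 \<le> 3 powr \<gamma> * s powr \<gamma>"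
    using False gamma_pos by (intro mult_mono ge_one_powr_ge_zero) auto
  with prob_le_1[of "cball y s"] show ?thesis by linarith
next
  case True
  obtain k where k: "(1/3) ^ Suc k < s" "s \<le> (1/3) ^ k"
    using bracketing_index[OF LIMSEQ_power_zero[of "1/3::real"] assms(2), of 0] True by auto
  define w where "w = replicate k (if y \<le> 0 then 0 else 3 :: nat)"
  have w: "set w \<subseteq> {..<4}" "set w \<inter> {1, 2} = {}" "cyl_len w = (1/3) ^ k"
    by (auto simp: w_def cyl_len_replicate)
  have "cball y s \<inter> {0<..<1} \<subseteq> cyl w"
    using assms(1) k(2) by (auto simp: w_def cyl_replicate cball_eq_atLeastAtMost)
  then have "measure mu (cball y s) \<le> measure mu (cyl w)"
    using measure_restrict_unit[of "cball y s"] by (auto simp: cyl_def intro!: finite_measure_mono)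
  also have "\<dots> = ((1/3) ^ k) powr \<gamma>"
    using w by (simp add: measure_cyl cyl_weight_eq_len_powr)
  also have "\<dots> \<le> (3 * s) powr \<gamma>"
    using k(1) gamma_pos by (intro powr_mono2) auto
  also have "\<dots> = 3 powr \<gamma> * s powr \<gamma>"
    using assms(2) by (simp add: powr_mult)
  finally show ?thesis .
qed

lemma measure_cball_junction_le:
  assumes "e \<in> S_map i ` {0, 1}" "0 < t"
  shows "measure mu (cball e t) \<le> 18 powr \<gamma> * t powr \<gamma>"
proof -
  have branch: "measure mu (S_map j -` cball e t) \<le> 18 powr \<gamma> * t powr \<gamma>" for j
  proof -
    obtain y where y: "e = S_map j y"
      using surjD[OF surj_S_map] by blast
    then have y_outside: "y \<notin> {0<..<1}"
      using assms(1) S_map_boundary_disjoint[of i j] by blast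
    have "measure mu (S_map j -` cball e t) = measure mu (cball y (t / S_ratio j))"
      by (simp add: y S_map_vimage_cball)
    also have "\<dots> \<le> 3 powr \<gamma> * (t / S_ratio j) powr \<gamma>"
      using y_outside assms(2) S_ratio_pos[of j] by (intro measure_cball_outside_unit_le) auto
    also have "\<dots> \<le> 3 powr \<gamma> * (6 * t) powr \<gamma>"
      using assms(2) S_ratio_pos[of j] S_ratio_bounds(1)[of j] gamma_pos
      by (intro mult_left_mono powr_mono2) (auto simp: field_simps)
    also have "\<dots> = 18 powr \<gamma> * t powr \<gamma>"
      using assms(2) by (simp add: powr_mult[symmetric])
    finally show ?thesis .
  qed
  have "measure mu (cball e t) = (\<Sum>j<4. p j * measure mu (S_map j -` cball e t))"
    by (rule self_similar) (simp add: borel_closed)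
  also have "\<dots> \<le> (\<Sum>j<4. p j * (18 powr \<gamma> * t powr \<gamma>))"
    using branch p_pos by (intro sum_mono mult_left_mono) (auto intro: less_imp_le)
  also have "\<dots> = 18 powr \<gamma> * t powr \<gamma>"
    using p_sum by (simp add: sum_distrib_right[symmetric])
  finally show ?thesis .
qed

definition p_min :: real where
  "p_min = min (p 0) (min (p 1) (p 2))"

lemma p_min_pos: "0 < p_min"
  using p_pos by (simp add: p_min_def)

lemma p_min_le: "p_min \<le> p i"
proof -
  have "p i = p 0 \<or> p i = p 1 \<or> p i = p 2"
    by (simp add: p_lam_def)
  then show ?thesis
    unfolding p_min_def by auto
qed

lemma p_min_le_1: "p_min \<le> 1"
  using p_min_le[of 0] p_less_1[of 0] by linarith

definition K :: real where
  "K = 18 powr \<gamma> / p_min"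

lemma K_ge_1: "1 \<le> K"
proof -
  have "1 \<le> 18 powr \<gamma>"
    using gamma_pos by (intro ge_one_powr_ge_zero) auto
  with p_min_le_1 p_min_pos show ?thesis
    by (simp add: K_def field_simps)
qed

lemma measure_cball_cyl_end_le:
  assumes "set w \<subseteq> {..<4}" "e \<in> cyl_ends w"
  shows "measure mu (cball e (cyl_len w)) \<le> K * cyl_weight lam w"
  using assms
proof (induction w arbitrary: e)
  case Nil
  have "measure mu (cball e 1) \<le> K"
    using prob_le_1[of "cball e 1"] K_ge_1 by linarith
  then show ?case by simp
next
  case (Cons i w)
  obtain e' where e': "e' \<in> cyl_ends w" "e = S_map i e'"
    using Cons.prems(2) by (auto simp: cyl_ends_Cons)
  have i: "i < 4" and w: "set w \<subseteq> {..<4}"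
    using Cons.prems(1) by auto
  show ?case
  proof (cases "e' \<in> {0, 1}")
    case True
    then have weight: "cyl_weight lam w = cyl_len w powr \<gamma>"
      using e'(1) by (intro cyl_weight_eq_len_powr cyl_ends_boundary)
    have "measure mu (cball e (cyl_len (i # w))) \<le> 18 powr \<gamma> * cyl_len (i # w) powr \<gamma>"
      using True e'(2) cyl_len_pos[of "i # w"] by (intro measure_cball_junction_le[of _ i]) auto
    also have "\<dots> \<le> 18 powr \<gamma> * cyl_len w powr \<gamma>"
      using mult_right_mono[OF order_trans[OF S_ratio_bounds(2)[of i]], of "1" "cyl_len w"]
        cyl_len_pos[of "i # w"] gamma_pos cyl_len_pos[of w]
      by (intro mult_left_mono powr_mono2) auto
    also have "\<dots> = K * (p_min * cyl_weight lam w)"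
      using weight p_min_pos by (simp add: K_def)
    also have "\<dots> \<le> K * (p i * cyl_weight lam w)"
      using K_ge_1 p_min_le cyl_weight_pos[of w] by (intro mult_left_mono mult_right_mono) auto
    finally show ?thesis by simp
  next
    case False
    have "measure mu (cball e (cyl_len (i # w))) = p i * measure mu (cball e' (cyl_len w))"
      using cyl_ends_gap[OF e'(1) False] i by (simp add: e'(2) measure_cball_S_map)
    also have "\<dots> \<le> p i * (K * cyl_weight lam w)"
      using Cons.IH[OF w e'(1)] p_pos[of i] by (intro mult_left_mono) auto
    finally show ?thesis by (simp add: mult_ac)
  qed
qed

lemma measure_ball_le_cyl_weight:
  assumes "set w \<subseteq> {..<4}" "x \<in> cyl w" "r \<le> cyl_len w"
  shows "measure mu (ball x r) \<le> 2 * K * cyl_weight lam w"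
proof -
  have fin: "finite (cyl_ends w)" "card (cyl_ends w) \<le> 2"
    by (auto simp: cyl_ends_def card_insert_if)
  have "measure mu (ball x r) \<le> measure mu (\<Union>e\<in>cyl_ends w. cball e (cyl_len w))"
    using ball_subset_cyl_ends[OF assms(2,3)] fin
    by (intro finite_measure_mono) (auto intro!: sets.finite_UN simp: borel_closed)
  also have "\<dots> \<le> (\<Sum>e\<in>cyl_ends w. measure mu (cball e (cyl_len w)))"
    using fin by (intro measure_UNION_le) (auto simp: borel_closed)
  also have "\<dots> \<le> of_nat (card (cyl_ends w)) * (K * cyl_weight lam w)"
    by (intro sum_bounded_above measure_cball_cyl_end_le[OF assms(1)])
  also have "\<dots> \<le> 2 * (K * cyl_weight lam w)"
    using fin K_ge_1 cyl_weight_pos[of w] by (intro mult_right_mono) auto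
  finally show ?thesis by simp
qed

lemma cyl_weight_le_measure_ball:
  assumes "set w \<subseteq> {..<4}" "x \<in> cyl w" "cyl_len w < r"
  shows "cyl_weight lam w \<le> measure mu (ball x r)"
  using finite_measure_mono[OF cyl_subset_ball[OF assms(2,3)]] measure_cyl[OF assms(1)] by simp

end

definition digit_word :: "real \<Rightarrow> nat \<Rightarrow> nat list" where
  "digit_word x n = map (\<lambda>k. u_digit k x) [0..<n]"

lemma digit_word_Suc: "digit_word x (Suc n) = U_map x # digit_word (T_map x) n"
proof -
  have "u_digit (Suc k) x = u_digit k (T_map x)" for k
    by (simp only: u_digit_def funpow_Suc_right comp_def)
  then show ?thesis
    unfolding digit_word_def by (simp add: map_upt_Suc u_digit_def del: upt_Suc)
qed

lemma digit_word_snoc: "digit_word x (Suc n) = digit_word x n @ [u_digit n x]"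
  by (simp add: digit_word_def)

lemma u_digit_lt_4: "u_digit k x < 4"
  by (simp add: u_digit_def U_map_def)

lemma digit_word_lt_4: "set (digit_word x n) \<subseteq> {..<4}"
  using u_digit_lt_4 by (auto simp: digit_word_def)

lemma length_digit_word [simp]: "length (digit_word x n) = n"
  by (simp add: digit_word_def)

lemma mem_cyl_digit_word: "x \<in> {0..1} \<Longrightarrow> x \<in> cyl (digit_word x n)"
proof (induction n arbitrary: x)
  case (Suc n)
  then have "T_map x \<in> cyl (digit_word (T_map x) n)"
    using T_map_unit by blast
  then have "S_map (U_map x) (T_map x) \<in> cyl (digit_word x (Suc n))"
    by (simp add: digit_word_Suc cyl_Cons)
  then show ?case
    by (simp add: S_map_U_map_T_map)
qed (simp add: digit_word_def cyl_Nil)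

lemma cyl_len_digit_word_Suc_less: "cyl_len (digit_word x (Suc n)) < cyl_len (digit_word x n)"
  using cyl_len_pos[of "digit_word x n"] S_ratio_bounds(2)[of "u_digit n x"]
  by (simp add: digit_word_snoc cyl_len_append)

lemma cyl_len_digit_word_tendsto_0: "(\<lambda>n. cyl_len (digit_word x n)) \<longlonglongrightarrow> 0"
proof (rule Lim_null_comparison)
  show "eventually (\<lambda>n. norm (cyl_len (digit_word x n)) \<le> (1/3) ^ n) sequentially"
  proof (intro always_eventually allI)
    fix n
    show "norm (cyl_len (digit_word x n)) \<le> (1/3) ^ n"
      using cyl_len_le_third_pow[of "digit_word x n"] cyl_len_pos[of "digit_word x n"] by simp
  qed
qed (rule LIMSEQ_power_zero, simp)

lemma beta_cnt_eq_sum: "real (beta_cnt i x n) = (\<Sum>k<n. of_bool (u_digit k x = i))"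
proof -
  have "{..<n} \<inter> {k. u_digit k x = i} = {k. k < n \<and> u_digit k x = i}"
    by auto
  then show ?thesis
    by (simp add: sum_of_bool_eq beta_cnt_def)
qed

lemma sum_digit_word_eq_beta_cnt:
  "(\<Sum>k<n. f (u_digit k x)) = (\<Sum>i<4. real (beta_cnt i x n) * f i)"
proof -
  have "(\<Sum>i<4. real (beta_cnt i x n) * f i) = (\<Sum>i<4. \<Sum>k<n. of_bool (u_digit k x = i) * f i)"
    by (simp only: beta_cnt_eq_sum sum_distrib_right)
  also have "\<dots> = (\<Sum>k<n. \<Sum>i<4. of_bool (u_digit k x = i) * f i)"
    by (rule sum.swap)
  also have "\<dots> = (\<Sum>k<n. f (u_digit k x))"
    using u_digit_lt_4 by (simp add: sum.delta')
  finally show ?thesis ..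
qed

lemma ln_cyl_len_digit_word:
  "ln (cyl_len (digit_word x n)) = - (real (beta_cnt 0 x n + beta_cnt 3 x n) * ln 3
     + real (beta_cnt 1 x n + beta_cnt 2 x n) * ln 6)"
proof -
  have "ln (cyl_len (digit_word x n)) = (\<Sum>k<n. ln (S_ratio (u_digit k x)))"
  proof (induction n)
    case (Suc n)
    then show ?case
      using cyl_len_pos[of "digit_word x n"] S_ratio_pos[of "u_digit n x"]
      by (simp add: digit_word_snoc cyl_len_append ln_mult)
  qed (simp add: digit_word_def)
  also have "\<dots> = (\<Sum>i<4. real (beta_cnt i x n) * ln (S_ratio i))"
    by (rule sum_digit_word_eq_beta_cnt)
  finally show ?thesis
    by (simp add: eval_nat_numeral S_ratio_def ln_div algebra_simps)
qed

context self_similar_measure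
begin

lemma ln_p:
  "ln (p i) = (if i = 1 then ln (6 * lam + 1) else if i = 2 then ln (6 * lam - 1) else 0)
     + \<gamma> * ln (S_ratio i)"
  using lam_gt by (simp add: p_lam_def S_ratio_def ln_mult ln_powr ln_div)

lemma ln_cyl_weight_digit_word:
  "ln (cyl_weight lam (digit_word x n)) = real (beta_cnt 1 x n) * ln (6 * lam + 1)
     + real (beta_cnt 2 x n) * ln (6 * lam - 1) + \<gamma> * ln (cyl_len (digit_word x n))"
proof -
  have "ln (cyl_weight lam (digit_word x n)) = (\<Sum>k<n. ln (p (u_digit k x)))"
  proof (induction n)
    case (Suc n)
    then show ?case
      using cyl_weight_pos[of "digit_word x n"] p_pos[of "u_digit n x"]
      by (simp add: digit_word_snoc cyl_weight_append ln_mult)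
  qed (simp add: digit_word_def)
  also have "\<dots> = (\<Sum>i<4. real (beta_cnt i x n) * ln (p i))"
    by (rule sum_digit_word_eq_beta_cnt)
  finally show ?thesis
    unfolding ln_cyl_len_digit_word by (simp add: eval_nat_numeral ln_p S_ratio_def ln_div algebra_simps)
qed

lemma ln_weight_div_ln_len_digit_word:
  assumes "1 \<le> n"
  shows "ln (cyl_weight lam (digit_word x n)) / ln (cyl_len (digit_word x n)) = \<gamma> -
    (real (beta_cnt 1 x n) * ln (6 * lam + 1) + real (beta_cnt 2 x n) * ln (6 * lam - 1)) /
    (real (beta_cnt 0 x n + beta_cnt 3 x n) * ln 3 + real (beta_cnt 1 x n + beta_cnt 2 x n) * ln 6)"
proof -
  have "0 < real n * ln 3"
    using assms by simp
  moreover have "ln (cyl_len (digit_word x n)) \<le> - real n * ln 3"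
    using ln_cyl_len_le[of "digit_word x n"] by simp
  ultimately have "ln (cyl_len (digit_word x n)) < 0"
    by linarith
  then show ?thesis
    unfolding ln_cyl_weight_digit_word by (simp add: ln_cyl_len_digit_word field_simps)
qed

lemma cyl_weight_le_1: "cyl_weight lam w \<le> 1"
proof (induction w)
  case (Cons i w)
  then show ?case
    using p_less_1[of i] p_pos[of i] cyl_weight_pos[of w] mult_mono[of "p i" 1 "cyl_weight lam w" 1]
    by simp
qed simp

lemma p_min_pow_le_cyl_weight: "p_min ^ length w \<le> cyl_weight lam w"
proof (induction w)
  case (Cons i w)
  then show ?case
    using p_min_le[of i] p_min_pos by (simp add: mult_mono)
qed simp

lemma abs_ln_weight_div_ln_len_le:
  assumes "w \<noteq> []"
  shows "\<bar>ln (cyl_weight lam w) / ln (cyl_len w)\<bar> \<le> - ln p_min / ln 3"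
proof -
  define n where "n = real (length w)"
  have "0 < n * ln 3"
    using assms by (simp add: n_def)
  with ln_cyl_len_le[of w] have ln_len: "ln (cyl_len w) \<le> - n * ln 3" "ln (cyl_len w) < 0"
    by (simp_all add: n_def)
  have "ln p_min \<le> 0"
    using p_min_le_1 p_min_pos by simp
  have "- ln (cyl_weight lam w) \<le> n * (- ln p_min)"
    using p_min_pow_le_cyl_weight[of w] p_min_pos cyl_weight_pos[of w]
    by (simp add: n_def ln_realpow[symmetric])
  also have "\<dots> = (- ln p_min / ln 3) * (n * ln 3)"
    by simp
  also have "\<dots> \<le> (- ln p_min / ln 3) * (- ln (cyl_len w))"
    using ln_len(1) \<open>ln p_min \<le> 0\<close> by (intro mult_left_mono) (auto simp: divide_nonpos_pos)
  finally have bound: "- ln (cyl_weight lam w) \<le> (- ln p_min / ln 3) * (- ln (cyl_len w))" .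
  have "ln (cyl_weight lam w) \<le> 0"
    using cyl_weight_le_1 cyl_weight_pos[of w] by simp
  then have "\<bar>ln (cyl_weight lam w) / ln (cyl_len w)\<bar> = (- ln (cyl_weight lam w)) / (- ln (cyl_len w))"
    using ln_len(2) by (simp add: divide_nonpos_neg)
  also have "\<dots> \<le> - ln p_min / ln 3"
    using bound ln_len(2) by (subst pos_divide_le_eq) linarith+
  finally show ?thesis .
qed

lemma measure_ball_digit_word_bounds:
  assumes "x \<in> {0..1}"
    and "cyl_len (digit_word x (Suc n)) < r" "r \<le> cyl_len (digit_word x n)"
  shows "p_min * cyl_weight lam (digit_word x n) \<le> measure mu (ball x r)"
    and "measure mu (ball x r) \<le> 2 * K * cyl_weight lam (digit_word x n)"
proof -
  have "p_min * cyl_weight lam (digit_word x n) \<le> cyl_weight lam (digit_word x (Suc n))"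
    using p_min_le cyl_weight_pos
    by (simp add: digit_word_snoc cyl_weight_append mult.commute mult_right_mono)
  also have "\<dots> \<le> measure mu (ball x r)"
    by (rule cyl_weight_le_measure_ball[OF digit_word_lt_4 mem_cyl_digit_word[OF assms(1)] assms(2)])
  finally show "p_min * cyl_weight lam (digit_word x n) \<le> measure mu (ball x r)" .
  show "measure mu (ball x r) \<le> 2 * K * cyl_weight lam (digit_word x n)"
    by (rule measure_ball_le_cyl_weight[OF digit_word_lt_4 mem_cyl_digit_word[OF assms(1)] assms(3)])
qed

definition ln_ball_error :: real where
  "ln_ball_error = ln (2 * K / p_min) + (- ln p_min / ln 3) * ln 6"

lemma ln_measure_ball_approx:
  assumes x: "x \<in> {0..1}" and n: "1 \<le> n"
    and r: "cyl_len (digit_word x (Suc n)) < r" "r \<le> cyl_len (digit_word x n)"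
  shows "\<bar>ln (measure mu (ball x r)) / ln r
     - ln (cyl_weight lam (digit_word x n)) / ln (cyl_len (digit_word x n))\<bar> \<le> ln_ball_error / (- ln r)"
proof -
  define L P where "L = cyl_len (digit_word x n)" and "P = cyl_weight lam (digit_word x n)"
  have "0 < real n * ln 3"
    using n by simp
  with ln_cyl_len_le[of "digit_word x n"] have ln_L: "ln L < 0"
    by (simp add: L_def)
  have "L * (1/6) \<le> cyl_len (digit_word x (Suc n))"
    using cyl_len_pos S_ratio_bounds(1)
    by (simp add: L_def digit_word_snoc cyl_len_append mult_left_mono)
  with r have scale: "1/6 * L \<le> r" "r \<le> 1 * L"
    by (simp_all add: L_def)
  then have ln_r: "ln r < 0"
    using ln_L cyl_len_pos[of "digit_word x n"] by (simp add: L_def)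
  have "\<bar>ln (measure mu (ball x r)) - ln P\<bar> \<le> ln (2 * K / p_min)"
    using measure_ball_digit_word_bounds[OF x r] p_min_pos p_min_le_1 K_ge_1 cyl_weight_pos
    by (intro abs_ln_diff_le) (auto simp: P_def)
  moreover have "\<bar>ln r - ln L\<bar> \<le> ln (1 / (1/6))"
    using scale cyl_len_pos by (intro abs_ln_diff_le) (auto simp: L_def)
  moreover have "\<bar>ln P / ln L\<bar> \<le> - ln p_min / ln 3"
    using n unfolding L_def P_def
    by (intro abs_ln_weight_div_ln_len_le) (auto simp: digit_word_def)
  ultimately have "\<bar>ln (measure mu (ball x r)) / ln r - ln P / ln L\<bar>
      \<le> ln_ball_error / \<bar>ln r\<bar>"
    unfolding ln_ball_error_def using ln_r ln_L by (intro abs_divide_diff_le) auto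
  then show ?thesis
    using ln_r by (simp add: L_def P_def)
qed

lemma Liminf_ln_measure_ball_eq_liminf:
  assumes "x \<in> {0..1}"
  shows "Liminf (at_right 0) (\<lambda>r. ereal (ln (measure mu (ball x r)) / ln r))
    = liminf (\<lambda>n. ereal (ln (cyl_weight lam (digit_word x n)) / ln (cyl_len (digit_word x n))))"
proof (rule Liminf_at_right_eq_liminf_sampled)
  show "0 < cyl_len (digit_word x n)" for n
    by (rule cyl_len_pos)
  show "eventually (\<lambda>n. \<forall>r. cyl_len (digit_word x (Suc n)) < r \<and> r \<le> cyl_len (digit_word x n) \<longrightarrow>
      \<bar>ln (measure mu (ball x r)) / ln r
        - ln (cyl_weight lam (digit_word x n)) / ln (cyl_len (digit_word x n))\<bar>
      \<le> ln_ball_error / - ln r) sequentially"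
    using ln_measure_ball_approx[OF assms] by (blast intro: eventually_sequentiallyI)
qed (rule cyl_len_digit_word_Suc_less cyl_len_digit_word_tendsto_0 tendsto_const_divide_neg_ln)+

theorem lower_local_dimension:
  assumes "x \<in> {0..1}"
  shows "Liminf (at_right 0) (\<lambda>r. ereal (ln (measure mu (ball x r)) / ln r)) =
         ereal \<gamma> -
         Limsup sequentially (\<lambda>n. ereal
           ((real (beta_cnt 1 x n) * ln (6*lam+1) + real (beta_cnt 2 x n) * ln (6*lam-1)) /
            (real (beta_cnt 0 x n + beta_cnt 3 x n) * ln 3
              + real (beta_cnt 1 x n + beta_cnt 2 x n) * ln 6)))"
    (is "_ = ereal \<gamma> - Limsup sequentially (\<lambda>n. ereal (?h n))")
proof -
  have "Liminf (at_right 0) (\<lambda>r. ereal (ln (measure mu (ball x r)) / ln r))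
      = liminf (\<lambda>n. ereal (ln (cyl_weight lam (digit_word x n)) / ln (cyl_len (digit_word x n))))"
    by (rule Liminf_ln_measure_ball_eq_liminf[OF assms])
  also have "\<dots> = liminf (\<lambda>n. ereal \<gamma> - ereal (?h n))"
  proof (rule Liminf_eq, rule eventually_sequentiallyI)
    fix n :: nat
    assume "1 \<le> n"
    then show "ereal (ln (cyl_weight lam (digit_word x n)) / ln (cyl_len (digit_word x n)))
        = ereal \<gamma> - ereal (?h n)"
      by (simp add: ln_weight_div_ln_len_digit_word)
  qed
  also have "\<dots> = ereal \<gamma> - limsup (\<lambda>n. ereal (?h n))"
    by (rule liminf_ereal_cminus) simp
  finally show ?thesis .
qed

end

theorem proposition4p2:
  fixes lam :: real and mu :: "real measure" and x :: real
  assumes "1/6 < lam" and "lam < 5/6"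
    and "self_similar_lam lam mu"
    and "0 \<le> x" and "x \<le> 1"
  shows "Liminf (at_right 0) (\<lambda>r. ereal (ln (measure mu (ball x r)) / ln r)) =
         ereal (gamma_lam lam) -
         Limsup sequentially (\<lambda>n. ereal
           ((real (beta_cnt 1 x n) * ln (6*lam+1) + real (beta_cnt 2 x n) * ln (6*lam-1)) /
            (real (beta_cnt 0 x n + beta_cnt 3 x n) * ln 3 + real (beta_cnt 1 x n + beta_cnt 2 x n) * ln 6)))"
proof -
  interpret self_similar_measure mu lam
    using assms(1,3) unfolding self_similar_lam_def self_similar_measure_def self_similar_measure_axioms_def
    by auto
  show ?thesis
    using assms(4,5) by (intro lower_local_dimension) simp
qed

end
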